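(* Let $P\subset\mathbb R^2$ be a polygon that is $\mathbb Z$-$\Delta_2$-free, inclusion-maximal among $\mathbb Z$-$\Delta_2$-free convex bodies, and whose interior contains exactly one lattice point of $\mathbb Z^2$. Then $\mathrm{width}(P)\le 3$.
   Context: A polygon is a two-dimensional convex polytope in $\mathbb R^2$. $\Delta_2=\mathrm{conv}(\mathbf 0,e_1,e_2)$. A $\mathbb Z$-unimodular copy of $X$ is $T(X)$ where $T(x)=Mx+b$, $M\in\mathrm{GL}_2(\mathbb Z)$, $b\in\mathbb Z^2$. A convex set is $\mathbb Z$-$\Delta_2$-free if its relative interior contains no $\mathbb Z$-unimodular copy of $\Delta_2$. Lattice width: $\mathrm{width}(K)=\inf_{u\in(\mathbb Z^2)^*\setminus\{0\}}\sup_{x,y\in K}|u(x)-u(y)|$. *)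

theory Defs
  imports "HOL-Analysis.Analysis"
begin

definition lattice_point :: "real^2 \<Rightarrow> bool" where
  "lattice_point x \<longleftrightarrow> x$1 \<in> \<int> \<and> x$2 \<in> \<int>"

definition Delta2 :: "(real^2) set" where
  "Delta2 = convex hull {0, axis 1 1, axis 2 1}"

definition Z_unimodular_copy :: "(real^2) set \<Rightarrow> (real^2) set \<Rightarrow> bool" where
  "Z_unimodular_copy X S \<longleftrightarrow>
     (\<exists>(M::real^2^2) b. (\<forall>i j. M$i$j \<in> \<int>) \<and> \<bar>det M\<bar> = 1 \<and> lattice_point b \<and>
        S = (\<lambda>x. M *v x + b) ` X)"

definition Z_Delta2_free :: "(real^2) set \<Rightarrow> bool" where
  "Z_Delta2_free K \<longleftrightarrow> convex K \<and>
     \<not> (\<exists>S. Z_unimodular_copy Delta2 S \<and> S \<subseteq> rel_interior K)"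

definition convex_body :: "(real^2) set \<Rightarrow> bool" where
  "convex_body K \<longleftrightarrow> compact K \<and> convex K \<and> interior K \<noteq> {}"

definition polygon :: "(real^2) set \<Rightarrow> bool" where
  "polygon P \<longleftrightarrow> polytope P \<and> aff_dim P = 2"

definition maximal_Z_Delta2_free :: "(real^2) set \<Rightarrow> bool" where
  "maximal_Z_Delta2_free P \<longleftrightarrow>
     (\<forall>K. convex_body K \<and> Z_Delta2_free K \<and> P \<subseteq> K \<longrightarrow> K = P)"

definition lattice_width :: "(real^2) set \<Rightarrow> real" where
  "lattice_width K = (INF u \<in> {u. lattice_point u \<and> u \<noteq> 0}.
       SUP x \<in> K. SUP y \<in> K. \<bar>u \<bullet> x - u \<bullet> y\<bar>)"

end

(*
  Write P as {x. u \<bullet> (x - z) \<le> 1 for all u \<in> U}, with z the interior lattice point and U an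
  irredundant set of facet normals. Pushing one facet u slightly outwards gives a convex body with
  no new lattice points; by maximality its interior contains a unimodular triangle, whose vertices
  other than z must lie on the facet. So the facet contains z + a and z + b with det(a, b) = \<plusminus>1,
  which makes u integral. Integrality then forces -u = \<alpha> v + \<beta> w for two facet normals v, w on
  either side of the direction b - a, with \<alpha>, \<beta> \<ge> 0 and \<alpha> + \<beta> \<le> 2. Hence
  -2 \<le> u \<bullet> (x - z) \<le> 1 on P, a lattice slab of width 3.
*)
theory Submission
  imports Defs
begin

definition det2 :: "real^2 \<Rightarrow> real^2 \<Rightarrow> real" where
  "det2 a b = a$1 * b$2 - a$2 * b$1"

lemma inner_real2: "(x::real^2) \<bullet> y = x$1 * y$1 + x$2 * y$2"
  by (simp add: inner_vec_def sum_2)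

lemma real2_eq_iff: "(x::real^2) = y \<longleftrightarrow> x$1 = y$1 \<and> x$2 = y$2"
  by (simp add: vec_eq_iff forall_2)

lemma det2_diff_rotate: "det2 (c - b) (a - b) = det2 (b - a) (c - a)"
  by (simp add: det2_def algebra_simps)

lemma orthogonal_to_basis_eq_0:
  assumes "w \<bullet> x = 0" "w \<bullet> y = 0" "det2 x y \<noteq> 0"
  shows "w = 0"
proof -
  have "w$1 * det2 x y = y$2 * (w \<bullet> x) - x$2 * (w \<bullet> y)"
       "w$2 * det2 x y = x$1 * (w \<bullet> y) - y$1 * (w \<bullet> x)"
    by (simp_all add: det2_def inner_real2 algebra_simps)
  then show ?thesis
    using assms by (simp add: real2_eq_iff)
qed

lemma Ints_ge_1_if_pos: "(x::real) \<in> \<int> \<Longrightarrow> 0 < x \<Longrightarrow> 1 \<le> x"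
  using Ints_nonzero_abs_ge1 by fastforce

lemma lattice_point_inner: "lattice_point a \<Longrightarrow> lattice_point b \<Longrightarrow> a \<bullet> b \<in> \<int>"
  by (simp add: inner_real2 lattice_point_def)

lemma lattice_point_diff: "lattice_point a \<Longrightarrow> lattice_point b \<Longrightarrow> lattice_point (a - b)"
  by (simp add: lattice_point_def)

lemma finite_lattice_points_bounded:
  assumes "bounded S"
  shows "finite ({y. lattice_point y} \<inter> S)"
proof -
  obtain B where B: "\<And>x. x \<in> S \<Longrightarrow> norm x \<le> B"
    using assms bounded_iff by metis
  define N where "N = \<lceil>B\<rceil>"
  define pt :: "int \<times> int \<Rightarrow> real^2" where "pt = (\<lambda>(i, j). vector [of_int i, of_int j])"
  have "{y. lattice_point y} \<inter> S \<subseteq> pt ` ({-N..N} \<times> {-N..N})"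
  proof
    fix y assume y: "y \<in> {y. lattice_point y} \<inter> S"
    then obtain i j where i: "y$1 = of_int i" and j: "y$2 = of_int j"
      by (auto simp: lattice_point_def elim!: Ints_cases)
    have "\<bar>y$1\<bar> \<le> B" "\<bar>y$2\<bar> \<le> B"
      using y B component_le_norm_cart[of y] by (auto intro: order_trans)
    then have "\<bar>i\<bar> \<le> N" "\<bar>j\<bar> \<le> N"
      unfolding N_def using i j by (metis ceiling_mono ceiling_of_int of_int_abs)+
    moreover have "y = pt (i, j)"
      using i j by (simp add: pt_def real2_eq_iff)
    ultimately show "y \<in> pt ` ({-N..N} \<times> {-N..N})"
      by (auto simp: abs_le_iff)
  qed
  then show ?thesis
    by (rule finite_subset) auto
qed

lemma lattice_point_normal:
  assumes "lattice_point a" "lattice_point b" "\<bar>det2 a b\<bar> = 1" "u \<bullet> a = 1" "u \<bullet> b = 1"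
  shows "lattice_point u"
proof -
  define \<delta> where "\<delta> = det2 a b"
  have "u$1 * \<delta> = b$2 * (u \<bullet> a) - a$2 * (u \<bullet> b)"
       "u$2 * \<delta> = a$1 * (u \<bullet> b) - b$1 * (u \<bullet> a)"
    by (simp_all add: \<delta>_def det2_def inner_real2 algebra_simps)
  moreover have "\<delta> * \<delta> = 1"
    using assms(3) by (simp add: \<delta>_def abs_if split: if_splits)
  then have "u$1 = (u$1 * \<delta>) * \<delta>" "u$2 = (u$2 * \<delta>) * \<delta>"
    by (simp_all add: mult.assoc)
  moreover have "\<delta> \<in> \<int>"
    using assms(1,2) by (simp add: \<delta>_def det2_def lattice_point_def)
  ultimately show ?thesis
    using assms(1,2,4,5) by (simp add: lattice_point_def)
qed

lemma neg_normal_in_opposite_cone: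
  assumes lattice: "lattice_point a" "lattice_point b" "lattice_point v" "lattice_point w"
    and unimodular: "\<bar>det2 a b\<bar> = 1"
    and u: "u \<bullet> a = 1" "u \<bullet> b = 1"
    and opposite: "0 < v \<bullet> (b - a)" "w \<bullet> (b - a) < 0"
    and below: "v \<bullet> a < 1" "v \<bullet> b < 1" "w \<bullet> a < 1"
  obtains \<alpha> \<beta> where "0 \<le> \<alpha>" "0 \<le> \<beta>" "\<alpha> + \<beta> \<le> 2" "\<alpha> *\<^sub>R v + \<beta> *\<^sub>R w = - u"
proof -
  define d where "d = b - a"
  define pv qv pw qw where "pv = v \<bullet> d" "qv = v \<bullet> a" "pw = w \<bullet> d" "qw = w \<bullet> a"
  have "pv \<in> \<int>" "qv \<in> \<int>" "- pw \<in> \<int>" "qv + pv \<in> \<int>" "qw \<in> \<int>"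
    using lattice by (simp_all add: d_def pv_qv_pw_qw_def lattice_point_inner lattice_point_diff)
  moreover have "0 < pv" "0 < - pw" "qv < 1" "qv + pv < 1" "qw < 1"
    using opposite below by (simp_all add: d_def pv_qv_pw_qw_def inner_diff_right)
  ultimately have ints: "1 \<le> pv" "1 \<le> - pw" "qv + pv \<le> 0" "qw \<le> 0"
    using Ints_ge_1_if_pos[of pv] Ints_ge_1_if_pos[of "- pw"]
      Ints_ge_1_if_pos[of "1 - (qv + pv)"] Ints_ge_1_if_pos[of "1 - qw"] by auto
  \<comment> \<open>\<alpha>, \<beta> solve (\<alpha> v + \<beta> w) \<bullet> a = -1, (\<alpha> v + \<beta> w) \<bullet> d = 0 by Cramer's rule with determinant D;
     the integrality bounds give 2 D \<ge> pv - pw, i.e. \<alpha> + \<beta> \<le> 2.\<close>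
  define D where "D = pw * qv - pv * qw"
  have "(- pw) * pv \<le> D"
    using ints mult_left_mono_neg[of qv "- pv" pw] mult_nonneg_nonpos[of pv qw]
    by (simp add: D_def)
  moreover have "- pw \<le> (- pw) * pv" "pv \<le> (- pw) * pv"
    using ints mult_left_mono[of 1 pv "- pw"] mult_right_mono[of 1 "- pw" pv] by simp_all
  ultimately have D: "pv - pw \<le> 2 * D" "0 < D"
    using ints by linarith+
  define \<alpha> \<beta> where "\<alpha> = - pw / D" "\<beta> = pv / D"
  have "u \<bullet> d = 0"
    using u by (simp add: d_def inner_diff_right)
  then have "(\<alpha> *\<^sub>R v + \<beta> *\<^sub>R w + u) \<bullet> a = \<alpha> * qv + \<beta> * qw + 1"
    "(\<alpha> *\<^sub>R v + \<beta> *\<^sub>R w + u) \<bullet> d = \<alpha> * pv + \<beta> * pw"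
    using u by (simp_all add: pv_qv_pw_qw_def inner_add_left)
  moreover have D\<alpha>: "D * \<alpha> = - pw" and D\<beta>: "D * \<beta> = pv"
    using D(2) by (simp_all add: \<alpha>_\<beta>_def)
  have "D * (\<alpha> * qv + \<beta> * qw + 1) = (D * \<alpha>) * qv + (D * \<beta>) * qw + D"
    "D * (\<alpha> * pv + \<beta> * pw) = (D * \<alpha>) * pv + (D * \<beta>) * pw"
    by (simp_all only: distrib_left mult.assoc mult_1_right)
  then have "D * (\<alpha> * qv + \<beta> * qw + 1) = 0" "D * (\<alpha> * pv + \<beta> * pw) = 0"
    unfolding D\<alpha> D\<beta> by (simp_all add: D_def algebra_simps)
  then have "\<alpha> * qv + \<beta> * qw + 1 = 0" "\<alpha> * pv + \<beta> * pw = 0"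
    using D(2) by simp_all
  ultimately have "(\<alpha> *\<^sub>R v + \<beta> *\<^sub>R w + u) \<bullet> a = 0" "(\<alpha> *\<^sub>R v + \<beta> *\<^sub>R w + u) \<bullet> d = 0"
    by simp_all
  moreover have "det2 a d \<noteq> 0"
    using unimodular by (auto simp: det2_def d_def algebra_simps)
  ultimately have "\<alpha> *\<^sub>R v + \<beta> *\<^sub>R w + u = 0"
    by (rule orthogonal_to_basis_eq_0)
  then have "\<alpha> *\<^sub>R v + \<beta> *\<^sub>R w = - u"
    by (simp add: eq_neg_iff_add_eq_0)
  moreover have "0 \<le> \<alpha>" "0 \<le> \<beta>" "\<alpha> + \<beta> \<le> 2"
    using ints D by (simp_all add: \<alpha>_\<beta>_def field_simps)
  ultimately show ?thesis
    using that by blast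
qed

lemma lattice_width_le_slab:
  assumes "lattice_point u" "u \<noteq> 0" "P \<noteq> {}" "bounded P"
    and slab: "\<And>x. x \<in> P \<Longrightarrow> m \<le> u \<bullet> x \<and> u \<bullet> x \<le> m + w"
  shows "lattice_width P \<le> w"
proof -
  define spread where "spread v = (SUP x \<in> P. SUP y \<in> P. \<bar>v \<bullet> x - v \<bullet> y\<bar>)" for v :: "real^2"
  obtain B where B: "\<And>x. x \<in> P \<Longrightarrow> norm x \<le> B"
    using \<open>bounded P\<close> bounded_iff by metis
  have bound: "\<bar>v \<bullet> x - v \<bullet> y\<bar> \<le> 2 * norm v * B" if "x \<in> P" "y \<in> P" for v x y
  proof -
    have "\<bar>v \<bullet> x - v \<bullet> y\<bar> \<le> \<bar>v \<bullet> x\<bar> + \<bar>v \<bullet> y\<bar>"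
      by (rule abs_triangle_ineq4)
    also have "\<dots> \<le> norm v * norm x + norm v * norm y"
      by (intro add_mono Cauchy_Schwarz_ineq2)
    also have "\<dots> \<le> norm v * B + norm v * B"
      using B that by (intro add_mono mult_left_mono) auto
    finally show ?thesis by (simp add: algebra_simps)
  qed
  have inner_bdd: "bdd_above ((\<lambda>y. \<bar>v \<bullet> x - v \<bullet> y\<bar>) ` P)" if "x \<in> P" for v x
    unfolding bdd_above_def using bound[OF that] by blast
  have outer_bdd: "bdd_above ((\<lambda>x. SUP y \<in> P. \<bar>v \<bullet> x - v \<bullet> y\<bar>) ` P)" for v
    using bound by (intro bdd_aboveI2 cSUP_least \<open>P \<noteq> {}\<close>) auto
  have "0 \<le> spread v" for v
  proof -
    obtain x where x: "x \<in> P"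
      using \<open>P \<noteq> {}\<close> by blast
    have "0 \<le> \<bar>v \<bullet> x - v \<bullet> x\<bar>" by simp
    also have "\<dots> \<le> (SUP y \<in> P. \<bar>v \<bullet> x - v \<bullet> y\<bar>)"
      by (rule cSUP_upper[OF x inner_bdd[OF x]])
    also have "\<dots> \<le> spread v"
      unfolding spread_def by (rule cSUP_upper[OF x outer_bdd])
    finally show ?thesis .
  qed
  then have "lattice_width P \<le> spread u"
    unfolding lattice_width_def spread_def[symmetric] using assms(1,2)
    by (intro cINF_lower bdd_belowI) auto
  also have "spread u \<le> w"
    unfolding spread_def
  proof (intro cSUP_least \<open>P \<noteq> {}\<close>)
    fix x y assume "x \<in> P" "y \<in> P"
    then show "\<bar>u \<bullet> x - u \<bullet> y\<bar> \<le> w"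
      using slab[of x] slab[of y] unfolding abs_le_iff by linarith
  qed
  finally show ?thesis .
qed

lemma Z_unimodular_copy_Delta2_vertices:
  assumes "Z_unimodular_copy Delta2 S"
  obtains a b c where "lattice_point a" "lattice_point b" "lattice_point c"
    "a \<in> S" "b \<in> S" "c \<in> S" "\<bar>det2 (b - a) (c - a)\<bar> = 1"
proof -
  obtain M :: "real^2^2" and t where M: "\<forall>i j. M$i$j \<in> \<int>" "\<bar>det M\<bar> = 1" "lattice_point t"
    and S: "S = (\<lambda>x. M *v x + t) ` Delta2"
    using assms unfolding Z_unimodular_copy_def by blast
  define T where "T x = M *v x + t" for x
  have "T 0 \<in> S" "T (axis 1 1) \<in> S" "T (axis 2 1) \<in> S"
    unfolding S T_def Delta2_def by (intro imageI hull_inc; simp)+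
  moreover have "T (axis 1 1) $ i = M$i$1 + t$i" "T (axis 2 1) $ i = M$i$2 + t$i" for i
    by (simp_all add: T_def matrix_vector_mult_def sum_2 axis_def)
  then have "lattice_point (T 0)" "lattice_point (T (axis 1 1))" "lattice_point (T (axis 2 1))"
    "det2 (T (axis 1 1) - T 0) (T (axis 2 1) - T 0) = det M"
    using M by (simp_all add: T_def lattice_point_def det2_def det_2)
  ultimately show ?thesis
    using that M(2) by metis
qed

lemma unimodular_triangle_in_larger_body:
  assumes "maximal_Z_Delta2_free P" "convex_body K" "P \<subseteq> K" "K \<noteq> P"
  obtains a b c where "lattice_point a" "lattice_point b" "lattice_point c"
    "a \<in> interior K" "b \<in> interior K" "c \<in> interior K" "\<bar>det2 (b - a) (c - a)\<bar> = 1"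
proof -
  have "\<not> Z_Delta2_free K"
    using assms unfolding maximal_Z_Delta2_free_def by blast
  moreover have "convex K" "rel_interior K = interior K"
    using assms(2) rel_interior_nonempty_interior unfolding convex_body_def by auto
  ultimately obtain S where "Z_unimodular_copy Delta2 S" "S \<subseteq> interior K"
    unfolding Z_Delta2_free_def by auto
  then show ?thesis
    using that Z_unimodular_copy_Delta2_vertices by (metis subsetD)
qed

lemma unimodular_triangle_apex:
  assumes unimodular: "\<bar>det2 (b - a) (c - a)\<bar> = 1"
    and L: "L \<subseteq> {x. u \<bullet> (x - z) = 1}"
    and vertices: "\<forall>x\<in>{a, b, c}. x = z \<or> x \<in> L"
  obtains x y where "x \<in> L" "y \<in> L" "\<bar>det2 (x - z) (y - z)\<bar> = 1"
proof -
  have apex: thesis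
    if "\<bar>det2 (q - p) (r - p)\<bar> = 1" "\<forall>x\<in>{p, q, r}. x = z \<or> x \<in> L" "p = z" for p q r
  proof -
    have "q \<noteq> z" "r \<noteq> z"
      using that by (auto simp: det2_def)
    then show thesis
      using that \<open>\<And>x y. x \<in> L \<Longrightarrow> y \<in> L \<Longrightarrow> \<bar>det2 (x - z) (y - z)\<bar> = 1 \<Longrightarrow> thesis\<close>
      by blast
  qed
  have "\<not> (a \<in> L \<and> b \<in> L \<and> c \<in> L)"
  proof
    assume "a \<in> L \<and> b \<in> L \<and> c \<in> L"
    then have "u \<bullet> (a - z) = 1" "u \<bullet> (b - z) = 1" "u \<bullet> (c - z) = 1"
      using L by auto
    moreover have "b - a = (b - z) - (a - z)" "c - a = (c - z) - (a - z)"
      by simp_all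
    ultimately have "u \<bullet> (a - z) = 1" "u \<bullet> (b - a) = 0" "u \<bullet> (c - a) = 0"
      by (simp_all only: inner_diff_right)
    moreover have "det2 (b - a) (c - a) \<noteq> 0"
      using unimodular by auto
    ultimately show False
      using orthogonal_to_basis_eq_0 by fastforce
  qed
  then consider "a = z" | "b = z" | "c = z"
    using vertices by blast
  then show thesis
  proof cases
    case 1
    then show thesis
      using apex[where p = a and q = b and r = c] unimodular vertices by blast
  next
    case 2
    then show thesis
      using apex[where p = b and q = c and r = a] unimodular vertices
        det2_diff_rotate[where a = a and b = b and c = c]
      by (simp add: insert_commute)
  next
    case 3
    then show thesis
      using apex[where p = c and q = a and r = b] unimodular vertices
        det2_diff_rotate[where a = b and b = c and c = a] det2_diff_rotate[where a = a and b = b and c = c]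
      by (simp add: insert_commute)
  qed
qed

lemma halfspace_at_eq: "{x. a \<bullet> (x - z) \<le> c} = {x. a \<bullet> x \<le> c + a \<bullet> z}"
  by (auto simp: inner_diff_right)

lemma open_halfspace_at_eq: "{x. a \<bullet> (x - z) < c} = {x. a \<bullet> x < c + a \<bullet> z}"
  by (auto simp: inner_diff_right)

lemma interior_subset_open_halfspace_at:
  fixes a :: "'a::euclidean_space"
  assumes "a \<noteq> 0" "S \<subseteq> {x. a \<bullet> (x - z) \<le> c}"
  shows "interior S \<subseteq> {x. a \<bullet> (x - z) < c}"
  using interior_mono[OF assms(2)] assms(1)
  by (simp add: halfspace_at_eq open_halfspace_at_eq)

lemma convex_hull_subset_halfspace_at:
  "S \<subseteq> {x. a \<bullet> (x - z) \<le> c} \<Longrightarrow> convex hull S \<subseteq> {x. a \<bullet> (x - z) \<le> c}"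
  by (simp add: hull_minimal halfspace_at_eq convex_halfspace_le)

lemma bounded_ray_imp_zero:
  fixes d :: "'a::real_normed_vector"
  assumes "bounded S" "\<And>t. 0 \<le> t \<Longrightarrow> z + t *\<^sub>R d \<in> S"
  shows "d = 0"
proof (rule ccontr)
  assume "d \<noteq> 0"
  obtain B where B: "\<And>x. x \<in> S \<Longrightarrow> norm x \<le> B"
    using assms(1) bounded_iff by metis
  define t where "t = (B + norm z + 1) / norm d"
  have "norm (z + 0 *\<^sub>R d) \<le> B"
    by (intro B assms(2)) simp
  then have "0 \<le> B"
    by (meson norm_ge_zero order_trans)
  then have "0 \<le> t" "norm (t *\<^sub>R d) = B + norm z + 1"
    using \<open>d \<noteq> 0\<close> by (simp_all add: t_def)
  moreover have "norm (t *\<^sub>R d) \<le> norm (z + t *\<^sub>R d) + norm z"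
    using norm_triangle_ineq4[of "z + t *\<^sub>R d" z] by simp
  moreover have "norm (z + t *\<^sub>R d) \<le> B"
    by (intro B assms(2) \<open>0 \<le> t\<close>)
  ultimately show False
    by linarith
qed

locale irredundant_facets =
  fixes P :: "'a::euclidean_space set" and U :: "'a set" and z :: 'a
  assumes finite_U: "finite U"
    and P_eq: "P = {x. \<forall>u\<in>U. u \<bullet> (x - z) \<le> 1}"
    and irredundant: "\<And>u. u \<in> U \<Longrightarrow> \<exists>x. 1 < u \<bullet> (x - z) \<and> (\<forall>v\<in>U - {u}. v \<bullet> (x - z) \<le> 1)"
    and bounded_P: "bounded P"
begin

lemma normal_nonzero: "u \<in> U \<Longrightarrow> u \<noteq> 0"
  using irredundant by force

lemma P_eq_INT: "P = (\<Inter>u\<in>U. {x. u \<bullet> x \<le> 1 + u \<bullet> z})"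
  by (auto simp: P_eq inner_diff_right diff_le_eq ac_simps)

lemma compact_P: "compact P"
  using bounded_P by (simp add: compact_eq_bounded_closed P_eq_INT closed_INT closed_halfspace_le)

lemma interior_P_eq: "interior P = {x. \<forall>u\<in>U. u \<bullet> (x - z) < 1}"
proof
  have "interior P \<subseteq> {x. u \<bullet> (x - z) < 1}" if "u \<in> U" for u
    using that by (intro interior_subset_open_halfspace_at normal_nonzero) (auto simp: P_eq)
  then show "interior P \<subseteq> {x. \<forall>u\<in>U. u \<bullet> (x - z) < 1}"
    by blast
  have "{x. \<forall>u\<in>U. u \<bullet> (x - z) < 1} = (\<Inter>u\<in>U. {x. u \<bullet> x < 1 + u \<bullet> z})"
    by (auto simp: inner_diff_right diff_less_eq ac_simps)
  then have "open {x. \<forall>u\<in>U. u \<bullet> (x - z) < 1}"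
    using finite_U by (simp add: open_INT open_halfspace_lt)
  then show "{x. \<forall>u\<in>U. u \<bullet> (x - z) < 1} \<subseteq> interior P"
    by (rule interior_maximal[rotated]) (auto simp: P_eq)
qed

lemma facet_relint_point:
  assumes "u \<in> U"
  obtains q where "u \<bullet> (q - z) = 1" "\<And>v. v \<in> U - {u} \<Longrightarrow> v \<bullet> (q - z) < 1"
proof -
  obtain x where x: "1 < u \<bullet> (x - z)" "\<And>v. v \<in> U - {u} \<Longrightarrow> v \<bullet> (x - z) \<le> 1"
    using irredundant[OF assms] by blast
  define q where "q = z + (1 / (u \<bullet> (x - z))) *\<^sub>R (x - z)"
  have "u \<bullet> (q - z) = 1"
    using x(1) by (simp add: q_def)
  moreover have "v \<bullet> (q - z) < 1" if "v \<in> U - {u}" for v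
    using x(1) x(2)[OF that] by (simp add: q_def divide_simps)
  ultimately show thesis
    using that by blast
qed

lemma exists_normal_pos:
  assumes "d \<noteq> 0"
  shows "\<exists>u\<in>U. 0 < u \<bullet> d"
proof (rule ccontr)
  assume "\<not> (\<exists>u\<in>U. 0 < u \<bullet> d)"
  then have "z + t *\<^sub>R d \<in> P" if "0 \<le> t" for t
    using that by (auto simp: P_eq not_less mult_nonneg_nonpos intro: order_trans[of _ 0 1])
  then have "d = 0"
    by (intro bounded_ray_imp_zero[OF bounded_P])
  with assms show False ..
qed
lemma small_push_parameter:
  assumes "finite Y" "\<And>y. y \<in> Y \<Longrightarrow> 1 < u \<bullet> (y - z)"
    and "\<And>v. v \<in> U - {u} \<Longrightarrow> v \<bullet> (q - z) < 1"
  obtains t where "0 < t" "t < 1" "\<And>v. v \<in> U - {u} \<Longrightarrow> v \<bullet> (q + t *\<^sub>R u - z) < 1"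
    "\<And>y. y \<in> Y \<Longrightarrow> 1 + t * (u \<bullet> u) < u \<bullet> (y - z)"
proof -
  have "\<forall>\<^sub>F t in at_right 0. 0 < t \<and> t < 1 \<and> (\<forall>v\<in>U - {u}. v \<bullet> (q + t *\<^sub>R u - z) < 1) \<and>
      (\<forall>y\<in>Y. 1 + t * (u \<bullet> u) < u \<bullet> (y - z))"
  proof (intro eventually_conj eventually_ball_finite ballI)
    show "\<forall>\<^sub>F t in at_right 0. 0 < (t::real)"
      by (rule eventually_at_right_less)
    show "\<forall>\<^sub>F t in at_right 0. t < (1::real)"
      by (rule eventually_at_rightI[of 0 1]) auto
    show "finite (U - {u})" "finite Y"
      using finite_U \<open>finite Y\<close> by simp_all
  next
    fix v assume "v \<in> U - {u}"
    have "((\<lambda>t. v \<bullet> (q + t *\<^sub>R u - z)) \<longlongrightarrow> v \<bullet> (q + 0 *\<^sub>R u - z)) (at_right 0)"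
      by (intro tendsto_intros)
    then show "\<forall>\<^sub>F t in at_right 0. v \<bullet> (q + t *\<^sub>R u - z) < 1"
      by (rule order_tendstoD) (simp add: assms(3)[OF \<open>v \<in> U - {u}\<close>])
  next
    fix y assume "y \<in> Y"
    have "((\<lambda>t. 1 + t * (u \<bullet> u)) \<longlongrightarrow> 1 + 0 * (u \<bullet> u)) (at_right 0)"
      by (intro tendsto_intros)
    then show "\<forall>\<^sub>F t in at_right 0. 1 + t * (u \<bullet> u) < u \<bullet> (y - z)"
      by (rule order_tendstoD) (simp add: assms(2)[OF \<open>y \<in> Y\<close>])
  qed
  then show thesis
    using that eventually_happens'[OF trivial_limit_at_right_real] by blast
qed

lemma pushout_avoiding_discrete:
  assumes "u \<in> U" and discrete: "\<And>B. bounded B \<Longrightarrow> finite (S \<inter> B)"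
  obtains p where "p \<notin> P" "\<And>v. v \<in> U - {u} \<Longrightarrow> v \<bullet> (p - z) < 1"
    "S \<inter> convex hull (insert p P) \<subseteq> P"
proof -
  obtain q where q_facet: "u \<bullet> (q - z) = 1" and q_inside: "\<And>v. v \<in> U - {u} \<Longrightarrow> v \<bullet> (q - z) < 1"
    using facet_relint_point[OF \<open>u \<in> U\<close>] by blast
  have "q \<in> P"
    using q_facet q_inside by (force simp: P_eq)
  define K_outer where "K_outer = convex hull (insert (q + u) P)"
  define Y where "Y = {y \<in> S \<inter> K_outer. 1 < u \<bullet> (y - z)}"
  have "finite (S \<inter> K_outer)"
    using bounded_P by (intro discrete) (simp add: K_outer_def bounded_convex_hull)
  then have "finite Y"
    by (rule finite_subset[rotated]) (auto simp: Y_def)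
  then obtain t where t: "0 < t" "t < 1"
    and t_inside: "\<And>v. v \<in> U - {u} \<Longrightarrow> v \<bullet> (q + t *\<^sub>R u - z) < 1"
    and t_gap: "\<And>y. y \<in> Y \<Longrightarrow> 1 + t * (u \<bullet> u) < u \<bullet> (y - z)"
    by (rule small_push_parameter[where u = u and q = q]) (auto simp: Y_def q_inside)
  have "0 < u \<bullet> u"
    using normal_nonzero[OF \<open>u \<in> U\<close>] by simp
  define p where "p = q + t *\<^sub>R u"
  define K where "K = convex hull (insert p P)"
  have p_u: "u \<bullet> (p - z) = 1 + t * (u \<bullet> u)"
    using q_facet by (simp add: p_def inner_diff_right inner_add_right)
  then have "1 < u \<bullet> (p - z)"
    using \<open>0 < t\<close> \<open>0 < u \<bullet> u\<close> by simp
  then have "p \<notin> P"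
    using \<open>u \<in> U\<close> unfolding P_eq by force
  have "K \<subseteq> K_outer"
  proof -
    have "(1 - t) *\<^sub>R q + t *\<^sub>R (q + u) \<in> K_outer"
      using \<open>q \<in> P\<close> t unfolding K_outer_def
      by (intro convexD[OF convex_convex_hull] hull_inc) auto
    then have "insert p P \<subseteq> K_outer"
      by (auto simp: p_def K_outer_def hull_inc algebra_simps)
    then show ?thesis
      unfolding K_def K_outer_def by (rule hull_minimal) simp
  qed
  have "K \<subseteq> {x. u \<bullet> (x - z) \<le> 1 + t * (u \<bullet> u)}"
    using \<open>u \<in> U\<close> \<open>0 < t\<close> \<open>0 < u \<bullet> u\<close> p_u unfolding K_def
    by (intro convex_hull_subset_halfspace_at) (force simp: P_eq intro: order_trans[of _ 1])
  moreover have "K \<subseteq> {x. v \<bullet> (x - z) \<le> 1}" if "v \<in> U - {u}" for v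
    using t_inside[OF that] that unfolding K_def
    by (intro convex_hull_subset_halfspace_at) (auto simp: P_eq p_def)
  ultimately have "S \<inter> K \<subseteq> P"
    using \<open>K \<subseteq> K_outer\<close> t_gap unfolding Y_def P_eq by (fastforce simp: not_less)
  then show thesis
    using that[OF \<open>p \<notin> P\<close>] t_inside by (simp add: p_def K_def)
qed

end

lemma polytope_irredundant_facets:
  fixes P :: "'a::euclidean_space set"
  assumes "polytope P" "z \<in> interior P"
  obtains U where "irredundant_facets P U z"
proof -
  have "affine hull P = UNIV"
    using assms(2) affine_hull_nonempty_interior by blast
  then obtain F where F: "finite F" "P = \<Inter>F" "\<And>F'. F' \<subset> F \<Longrightarrow> P \<subset> \<Inter>F'"
    and halfspaces: "\<forall>h\<in>F. \<exists>a b. a \<noteq> 0 \<and> h = {x. a \<bullet> x \<le> b}"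
    using polytope_imp_polyhedron[OF assms(1)] unfolding polyhedron_Int_affine_minimal by auto
  then obtain A B where AB: "\<And>h. h \<in> F \<Longrightarrow> A h \<noteq> 0 \<and> h = {x. A h \<bullet> x \<le> B h}"
    by metis
  have gap: "A h \<bullet> z < B h" if "h \<in> F" for h
  proof -
    have "P \<subseteq> {x. A h \<bullet> x \<le> B h}"
      using F(2) that AB[OF that] by blast
    then have "interior P \<subseteq> {x. A h \<bullet> x < B h}"
      using AB[OF that] by (metis interior_mono interior_halfspace_le)
    then show ?thesis
      using assms(2) by blast
  qed
  define nrm where "nrm h = (1 / (B h - A h \<bullet> z)) *\<^sub>R A h" for h
  have mem: "x \<in> h \<longleftrightarrow> nrm h \<bullet> (x - z) \<le> 1" if "h \<in> F" for h x
  proof -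
    have "nrm h \<bullet> (x - z) = A h \<bullet> (x - z) / (B h - A h \<bullet> z)"
      by (simp add: nrm_def)
    then have "nrm h \<bullet> (x - z) \<le> 1 \<longleftrightarrow> A h \<bullet> (x - z) \<le> B h - A h \<bullet> z"
      using gap[OF that] by (simp add: pos_divide_le_eq)
    then show ?thesis
      using AB[OF that] by (auto simp: inner_diff_right)
  qed
  show thesis
  proof (rule that, unfold_locales)
    show "finite (nrm ` F)"
      using F(1) by simp
    show "P = {x. \<forall>u\<in>nrm ` F. u \<bullet> (x - z) \<le> 1}"
      using F(2) mem by auto
    show "bounded P"
      using assms(1) polytope_imp_bounded by blast
  next
    fix u assume "u \<in> nrm ` F"
    then obtain h where h: "h \<in> F" "u = nrm h"
      by blast
    then obtain x where x: "x \<in> \<Inter>(F - {h})" "x \<notin> P"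
      using F(3)[of "F - {h}"] by blast
    then have "x \<notin> h"
      using F(2) by blast
    then have "1 < u \<bullet> (x - z)"
      using mem[OF h(1)] h(2) by simp
    moreover have "v \<bullet> (x - z) \<le> 1" if "v \<in> nrm ` F - {u}" for v
      using that x(1) mem h(2) by blast
    ultimately show "\<exists>x. 1 < u \<bullet> (x - z) \<and> (\<forall>v\<in>nrm ` F - {u}. v \<bullet> (x - z) \<le> 1)"
      by blast
  qed
qed

locale maximal_free_facets = irredundant_facets P U z
  for P :: "(real^2) set" and U z +
  assumes lattice_z: "lattice_point z"
    and unique_interior_lattice_point: "\<And>y. y \<in> interior P \<Longrightarrow> lattice_point y \<Longrightarrow> y = z"
    and maximal: "maximal_Z_Delta2_free P"
begin

lemma interior_lattice_point_of_pushout: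
  assumes "u \<in> U" and p_inside: "\<And>v. v \<in> U - {u} \<Longrightarrow> v \<bullet> (p - z) < 1"
    and no_new: "{y. lattice_point y} \<inter> convex hull (insert p P) \<subseteq> P"
    and y: "y \<in> interior (convex hull (insert p P))" "lattice_point y"
  shows "y = z \<or> (u \<bullet> (y - z) = 1 \<and> (\<forall>v\<in>U - {u}. v \<bullet> (y - z) < 1))"
proof -
  have "y \<in> P"
    using no_new y interior_subset by blast
  have "v \<bullet> (y - z) < 1" if "v \<in> U - {u}" for v
  proof -
    have "convex hull (insert p P) \<subseteq> {x. v \<bullet> (x - z) \<le> 1}"
      using p_inside[OF that] that by (intro convex_hull_subset_halfspace_at) (auto simp: P_eq)
    then show ?thesis
      using interior_subset_open_halfspace_at normal_nonzero that y(1) by blast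
  qed
  moreover have "u \<bullet> (y - z) \<le> 1"
    using \<open>y \<in> P\<close> \<open>u \<in> U\<close> by (simp add: P_eq)
  ultimately consider "\<forall>v\<in>U. v \<bullet> (y - z) < 1" | "u \<bullet> (y - z) = 1 \<and> (\<forall>v\<in>U - {u}. v \<bullet> (y - z) < 1)"
    by fastforce
  then show ?thesis
    using unique_interior_lattice_point y(2) by cases (auto simp: interior_P_eq)
qed

lemma facet_unimodular_pair:
  assumes "u \<in> U"
  obtains a b where "lattice_point a" "lattice_point b" "\<bar>det2 a b\<bar> = 1" "u \<bullet> a = 1" "u \<bullet> b = 1"
    "\<And>v. v \<in> U - {u} \<Longrightarrow> v \<bullet> a < 1 \<and> v \<bullet> b < 1"
proof -
  obtain p where "p \<notin> P" and p_inside: "\<And>v. v \<in> U - {u} \<Longrightarrow> v \<bullet> (p - z) < 1"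
    and no_new: "{y. lattice_point y} \<inter> convex hull (insert p P) \<subseteq> P"
    using pushout_avoiding_discrete[OF assms finite_lattice_points_bounded] by blast
  define K where "K = convex hull (insert p P)"
  have "P \<subseteq> K" "p \<in> K"
    by (auto simp: K_def hull_inc)
  have "z \<in> interior P"
    by (simp add: interior_P_eq)
  then have "convex_body K"
    using compact_P interior_mono[OF \<open>P \<subseteq> K\<close>]
    by (auto simp: convex_body_def K_def compact_convex_hull)
  then obtain c0 c1 c2 where c: "lattice_point c0" "lattice_point c1" "lattice_point c2"
    "c0 \<in> interior K" "c1 \<in> interior K" "c2 \<in> interior K" "\<bar>det2 (c1 - c0) (c2 - c0)\<bar> = 1"
    using unimodular_triangle_in_larger_body[OF maximal _ \<open>P \<subseteq> K\<close>] \<open>p \<in> K\<close> \<open>p \<notin> P\<close> by blast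
  define L where
    "L = {y. lattice_point y \<and> u \<bullet> (y - z) = 1 \<and> (\<forall>v\<in>U - {u}. v \<bullet> (y - z) < 1)}"
  have apex_or_facet: "y = z \<or> y \<in> L" if "y \<in> interior K" "lattice_point y" for y
    using interior_lattice_point_of_pushout[OF assms p_inside no_new] that by (auto simp: K_def L_def)
  obtain x y where "x \<in> L" "y \<in> L" "\<bar>det2 (x - z) (y - z)\<bar> = 1"
    using unimodular_triangle_apex[OF c(7), of L u z] apex_or_facet c(1-6) by (auto simp: L_def)
  then show thesis
    using that[of "x - z" "y - z"] lattice_point_diff lattice_z by (simp add: L_def)
qed

lemma lattice_point_facet_normal: "u \<in> U \<Longrightarrow> lattice_point u"
  by (metis facet_unimodular_pair lattice_point_normal)

lemma facet_slab_lower: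
  assumes "u \<in> U" "x \<in> P"
  shows "- 2 \<le> u \<bullet> (x - z)"
proof -
  obtain a b where ab: "lattice_point a" "lattice_point b" "\<bar>det2 a b\<bar> = 1" "u \<bullet> a = 1" "u \<bullet> b = 1"
    and below: "\<And>v. v \<in> U - {u} \<Longrightarrow> v \<bullet> a < 1 \<and> v \<bullet> b < 1"
    using facet_unimodular_pair[OF \<open>u \<in> U\<close>] by blast
  have "u \<bullet> (b - a) = 0"
    using ab by (simp add: inner_diff_right)
  moreover have "b - a \<noteq> 0"
    using ab(3) by (auto simp: det2_def)
  ultimately obtain v w where v: "v \<in> U" "0 < v \<bullet> (b - a)" and w: "w \<in> U" "0 < w \<bullet> (a - b)"
    using exists_normal_pos[of "b - a"] exists_normal_pos[of "a - b"] by auto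
  have "w \<bullet> (b - a) < 0"
    using w(2) by (simp add: inner_diff_right)
  have "v \<noteq> u" "w \<noteq> u"
    using v w \<open>u \<bullet> (b - a) = 0\<close> by (auto simp: inner_diff_right)
  then have "v \<bullet> a < 1" "v \<bullet> b < 1" "w \<bullet> a < 1"
    using below v(1) w(1) by auto
  then obtain \<alpha> \<beta> where "0 \<le> \<alpha>" "0 \<le> \<beta>" "\<alpha> + \<beta> \<le> 2" and comb: "\<alpha> *\<^sub>R v + \<beta> *\<^sub>R w = - u"
    by (rule neg_normal_in_opposite_cone[OF ab(1,2) lattice_point_facet_normal[OF v(1)]
          lattice_point_facet_normal[OF w(1)] ab(3-5) v(2) \<open>w \<bullet> (b - a) < 0\<close>])
  have "- (u \<bullet> (x - z)) = (\<alpha> *\<^sub>R v + \<beta> *\<^sub>R w) \<bullet> (x - z)"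
    by (simp add: comb)
  also have "\<dots> = \<alpha> * (v \<bullet> (x - z)) + \<beta> * (w \<bullet> (x - z))"
    by (simp add: inner_add_left)
  also have "\<dots> \<le> \<alpha> + \<beta>"
    using v(1) w(1) \<open>x \<in> P\<close> \<open>0 \<le> \<alpha>\<close> \<open>0 \<le> \<beta>\<close>
    by (intro add_mono) (simp_all add: P_eq mult_left_le)
  finally show ?thesis
    using \<open>\<alpha> + \<beta> \<le> 2\<close> by linarith
qed

theorem lattice_width_le_3: "lattice_width P \<le> 3"
proof -
  have "U \<noteq> {}"
    using bounded_P not_bounded_UNIV by (auto simp: P_eq)
  then obtain u where "u \<in> U"
    by blast
  show ?thesis
  proof (rule lattice_width_le_slab)
    show "lattice_point u" "u \<noteq> 0"
      using \<open>u \<in> U\<close> lattice_point_facet_normal normal_nonzero by auto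
    show "P \<noteq> {}"
      by (auto simp: P_eq intro!: exI[of _ z])
    show "bounded P"
      by (rule bounded_P)
    fix x assume "x \<in> P"
    then have "- 2 \<le> u \<bullet> (x - z)" "u \<bullet> (x - z) \<le> 1"
      using facet_slab_lower[OF \<open>u \<in> U\<close>] \<open>u \<in> U\<close> by (auto simp: P_eq)
    then show "u \<bullet> z - 2 \<le> u \<bullet> x \<and> u \<bullet> x \<le> u \<bullet> z - 2 + 3"
      by (simp add: inner_diff_right)
  qed
qed

end

theorem proposition4p4:
  fixes P :: "(real^2) set"
  assumes "polygon P"
    and "Z_Delta2_free P"
    and "maximal_Z_Delta2_free P"
    and "\<exists>!z. z \<in> interior P \<and> lattice_point z"
  shows "lattice_width P \<le> 3"
proof -
  obtain z where z: "z \<in> interior P" "lattice_point z"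
    and unique: "\<And>y. y \<in> interior P \<Longrightarrow> lattice_point y \<Longrightarrow> y = z"
    using assms(4) by blast
  have "polytope P"
    using assms(1) by (simp add: polygon_def)
  then obtain U where "irredundant_facets P U z"
    using z(1) by (rule polytope_irredundant_facets)
  then interpret maximal_free_facets P U z
    using z(2) unique assms(3) by (intro maximal_free_facets.intro maximal_free_facets_axioms.intro)
  show ?thesis
    by (rule lattice_width_le_3)
qed

end
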